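(* Let $I$, $\tilde I$, $h$, $h_A$ and the rules $\Rightarrow_t$, $\Rightarrow_e$ (for an arbitrary choice of nonempty witness sets) be as in the context. Let $\tilde\pi=\tilde s_1\to\tilde s_2\to\cdots\to\tilde s_n$ be a path in $\tilde I$ whose edges are temporal transitions $\tilde s_k\xrightarrow{\tilde\alpha_{k+1}}\tilde s_{k+1}$ or epistemic transitions $\tilde s_k\sim_a\tilde s_{k+1}$. If $st_1\subseteq h^{-1}(\tilde s_1)$ and $(\tilde\pi,st_1)\Rightarrow^*(\tilde s_n,st_n)$ with $st_n\neq\emptyset$, then there is a sequence of concrete states $s_1,\dots,s_n$ with $s_1\in st_1$, $s_n\in st_n$, $h(s_k)=\tilde s_k$ for all $k$, such that for each edge: if it is $\tilde s_k\xrightarrow{\tilde\alpha_{k+1}}\tilde s_{k+1}$ then $\tau(\alpha_{k+1},s_k)=s_{k+1}$ for some $\alpha_{k+1}$ with $h_A(\alpha_{k+1})=\tilde\alpha_{k+1}$, and if it is $\tilde s_k\sim_a\tilde s_{k+1}$ then $l_a(s_k)=l_a(s_{k+1})$ and $s_{k+1}$ is reachable in $I$.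
   Context: $I$ and $\tilde I$ are interpreted systems over the same agents (global states $S,\tilde S$ with $l_a(s)$ the local state of agent $a$; initial states $S_0,\tilde S_0$; partial transition functions $\tau,\tilde\tau$); a state of $I$ is reachable if obtained from $S_0$ by finitely many transitions. $h:S\to\tilde S$ and $h_A:ACT\to\widetilde{ACT}$ are given functions. For $st\subseteq S$ let $L_a(st)=\{l_a(s)\mid s\in st\}$ and $\Theta_\alpha(st)=\{\tau(\alpha,s)\mid s\in st,\ \tau(\alpha,s)\text{ defined}\}$. Paths in $\tilde I$ are written with first edge followed by the rest: $e\,\|\,\pi$; a path of length zero is a state. Rule TemporalCheck: $(\tilde s\xrightarrow{\tilde\alpha}\tilde s'\,\|\,\pi,st)\Rightarrow_t(\pi,\bigcup_{\alpha\in h_A^{-1}(\tilde\alpha)}\Theta_\alpha(st)\cap h^{-1}(\tilde s'))$; $\Rightarrow_t^*$ is a finite sequence of such steps. Rule EpistemicCheck: for each abstract state $\tilde s'$ fix a nonempty set $W_{\tilde s'}$ of witness paths, each a temporal path $\pi'=\tilde s'_0\xrightarrow{\tilde\alpha'_1}\cdots\xrightarrow{\tilde\alpha'_m}\tilde s'$ of $\tilde I$ with $\tilde s'_0\in\tilde S_0$; let $st'=\bigcup_{\pi'\in W_{\tilde s'}}\{X\mid (\pi',S_0\cap h^{-1}(\tilde s'_0))\Rightarrow_t^*(\tilde s',X)\}$; then $(\tilde s\sim_a\tilde s'\,\|\,\pi,st)\Rightarrow_e(\pi,\hat{st})$ where $\hat{st}=\{s\in st'\mid l_a(s)\in L_a(st)\}$.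 $\Rightarrow^*$ denotes a finite sequence of $\Rightarrow_t$ and $\Rightarrow_e$ steps. *)

theory Defs
  imports Main
begin

datatype ('ag, 'aact, 'as) edge = TEdge 'aact 'as | EEdge 'ag 'as

fun edge_target :: "('ag, 'aact, 'as) edge \<Rightarrow> 'as" where
  "edge_target (TEdge a t) = t"
| "edge_target (EEdge a t) = t"

text \<open>A path is its first state followed by a list of edges; the list of states
visited along a path.\<close>
definition path_states :: "'as \<times> ('ag, 'aact, 'as) edge list \<Rightarrow> 'as list" where
  "path_states p = fst p # map edge_target (snd p)"

fun valid_edges ::
  "('aact \<Rightarrow> 'as \<Rightarrow> 'as option) \<Rightarrow> ('ag \<Rightarrow> 'as \<Rightarrow> 'al) \<Rightarrow> 'as \<Rightarrow> ('ag, 'aact, 'as) edge list \<Rightarrow> bool" where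
  "valid_edges ttau tlo s [] = True"
| "valid_edges ttau tlo s (TEdge a t # es) = (ttau a s = Some t \<and> valid_edges ttau tlo t es)"
| "valid_edges ttau tlo s (EEdge ag t # es) = (tlo ag s = tlo ag t \<and> valid_edges ttau tlo t es)"

definition witness_path ::
  "'as set \<Rightarrow> ('aact \<Rightarrow> 'as \<Rightarrow> 'as option) \<Rightarrow> ('ag \<Rightarrow> 'as \<Rightarrow> 'al)
   \<Rightarrow> 'as \<times> ('ag, 'aact, 'as) edge list \<Rightarrow> 'as \<Rightarrow> bool" where
  "witness_path tS0 ttau tlo p s' \<longleftrightarrow>
     fst p \<in> tS0 \<and> (\<forall>e \<in> set (snd p). \<exists>a t. e = TEdge a t) \<and>
     valid_edges ttau tlo (fst p) (snd p) \<and> last (path_states p) = s'"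

definition Theta :: "('act \<Rightarrow> 's \<Rightarrow> 's option) \<Rightarrow> 'act \<Rightarrow> 's set \<Rightarrow> 's set" where
  "Theta tau \<alpha> st = {s'. \<exists>s \<in> st. tau \<alpha> s = Some s'}"

inductive tstep ::
  "('s \<Rightarrow> 'as) \<Rightarrow> ('act \<Rightarrow> 'aact) \<Rightarrow> ('act \<Rightarrow> 's \<Rightarrow> 's option)
   \<Rightarrow> ('as \<times> ('ag, 'aact, 'as) edge list) \<times> 's set
   \<Rightarrow> ('as \<times> ('ag, 'aact, 'as) edge list) \<times> 's set \<Rightarrow> bool"
  for h hA tau where
  "tstep h hA tau ((ts, TEdge ta ts' # es), st)
     ((ts', es), (\<Union>\<alpha> \<in> {\<alpha>. hA \<alpha> = ta}. Theta tau \<alpha> st) \<inter> h -` {ts'})"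

definition eset ::
  "('s \<Rightarrow> 'as) \<Rightarrow> ('act \<Rightarrow> 'aact) \<Rightarrow> ('act \<Rightarrow> 's \<Rightarrow> 's option) \<Rightarrow> 's set
   \<Rightarrow> ('as \<Rightarrow> ('as \<times> ('ag, 'aact, 'as) edge list) set) \<Rightarrow> 'as \<Rightarrow> 's set" where
  "eset h hA tau S0 W ts' =
     \<Union> {X. \<exists>p \<in> W ts'. (tstep h hA tau)\<^sup>*\<^sup>* (p, S0 \<inter> h -` {fst p}) ((ts', []), X)}"

inductive estep ::
  "('s \<Rightarrow> 'as) \<Rightarrow> ('act \<Rightarrow> 'aact) \<Rightarrow> ('act \<Rightarrow> 's \<Rightarrow> 's option) \<Rightarrow> 's set
   \<Rightarrow> ('ag \<Rightarrow> 's \<Rightarrow> 'l) \<Rightarrow> ('as \<Rightarrow> ('as \<times> ('ag, 'aact, 'as) edge list) set)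
   \<Rightarrow> ('as \<times> ('ag, 'aact, 'as) edge list) \<times> 's set
   \<Rightarrow> ('as \<times> ('ag, 'aact, 'as) edge list) \<times> 's set \<Rightarrow> bool"
  for h hA tau S0 l W where
  "W ts' \<noteq> {} \<Longrightarrow>
   estep h hA tau S0 l W ((ts, EEdge a ts' # es), st)
     ((ts', es), {s \<in> eset h hA tau S0 W ts'. l a s \<in> l a ` st})"

definition cstep where
  "cstep h hA tau S0 l W x y \<longleftrightarrow> tstep h hA tau x y \<or> estep h hA tau S0 l W x y"

inductive reachable :: "'s set \<Rightarrow> ('act \<Rightarrow> 's \<Rightarrow> 's option) \<Rightarrow> 's \<Rightarrow> bool"
  for S0 tau where
  init: "s \<in> S0 \<Longrightarrow> reachable S0 tau s"
| step: "reachable S0 tau s \<Longrightarrow> tau \<alpha> s = Some s' \<Longrightarrow> reachable S0 tau s'"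

end

theory Submission
  imports Defs
begin

text \<open>
  The rules TemporalCheck and EpistemicCheck replace the current set
  of candidate concrete states by states reached from it: a temporal step keeps
  the successors, under actions mapped to the edge label, that lie over the new
  abstract state; an epistemic step keeps reachable states over the new abstract
  state sharing agent a's local state with some previous candidate.  Hence every
  state of the final set traces back, edge by edge, to a state of the initial set.
\<close>

lemma tstep_run_invariant:
  assumes "(tstep h hA tau)\<^sup>*\<^sup>* x y"
    and "snd x \<subseteq> {s. reachable S0 tau s} \<inter> h -` {fst (fst x)}"
  shows "snd y \<subseteq> {s. reachable S0 tau s} \<inter> h -` {fst (fst y)}"
  using assms
proof (induction rule: rtranclp_induct)
  case base
  then show ?case by simp
next
  case (step y z)
  from step.hyps(2) show ?case
  proof cases
    case (1 ts ta ts' es st)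
    with step.IH step.prems show ?thesis
      by (auto simp: Theta_def intro: reachable.step)
  qed
qed

text \<open>The set st' of EpistemicCheck consists of reachable states over the
  target abstract state, since each witness run starts in initial states.\<close>
lemma eset_reachable:
  assumes "s \<in> eset h hA tau S0 W ts'"
  shows "h s = ts' \<and> reachable S0 tau s"
proof -
  from assms obtain X p where "s \<in> X" "p \<in> W ts'"
    and run: "(tstep h hA tau)\<^sup>*\<^sup>* (p, S0 \<inter> h -` {fst p}) ((ts', []), X)"
    unfolding eset_def by blast
  have "X \<subseteq> {s. reachable S0 tau s} \<inter> h -` {ts'}"
    using tstep_run_invariant[OF run] by (auto intro: reachable.init)
  with \<open>s \<in> X\<close> show ?thesis by auto
qed

fun concrete_edge ::
  "('act \<Rightarrow> 'aact) \<Rightarrow> ('act \<Rightarrow> 's \<Rightarrow> 's option) \<Rightarrow> 's set \<Rightarrow> ('ag \<Rightarrow> 's \<Rightarrow> 'l)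
   \<Rightarrow> ('ag, 'aact, 'as) edge \<Rightarrow> 's \<Rightarrow> 's \<Rightarrow> bool" where
  "concrete_edge hA tau S0 l (TEdge ta t) s s' = (\<exists>\<alpha>. hA \<alpha> = ta \<and> tau \<alpha> s = Some s')"
| "concrete_edge hA tau S0 l (EEdge a t) s s' = (l a s = l a s' \<and> reachable S0 tau s')"

primrec concrete_path ::
  "('s \<Rightarrow> 'as) \<Rightarrow> ('act \<Rightarrow> 'aact) \<Rightarrow> ('act \<Rightarrow> 's \<Rightarrow> 's option) \<Rightarrow> 's set
   \<Rightarrow> ('ag \<Rightarrow> 's \<Rightarrow> 'l) \<Rightarrow> 's \<Rightarrow> ('ag, 'aact, 'as) edge list \<Rightarrow> 's list \<Rightarrow> bool" where
  "concrete_path h hA tau S0 l s [] ss = (ss = [])"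
| "concrete_path h hA tau S0 l s (e # es) ss =
     (case ss of [] \<Rightarrow> False
      | s' # ss' \<Rightarrow> h s' = edge_target e \<and> concrete_edge hA tau S0 l e s s' \<and>
                   concrete_path h hA tau S0 l s' es ss')"

lemma run_traces_back:
  assumes "(cstep h hA tau S0 l W)\<^sup>*\<^sup>* c ((tsn, []), stn)"
    and "sn \<in> stn"
  shows "\<exists>s \<in> snd c. \<exists>ss. concrete_path h hA tau S0 l s (snd (fst c)) ss \<and> last (s # ss) = sn"
  using assms(1)
proof (induction rule: converse_rtranclp_induct)
  case base
  show ?case
    using assms(2) by (intro bexI[of _ sn] exI[of _ "[]"]) auto
next
  case (step c d)
  from step.IH obtain s' ss where s': "s' \<in> snd d"
    and path: "concrete_path h hA tau S0 l s' (snd (fst d)) ss" "last (s' # ss) = sn"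
    by blast
  from step.hyps(1) consider "tstep h hA tau c d" | "estep h hA tau S0 l W c d"
    unfolding cstep_def by blast
  then show ?case
  proof cases
    case 1
    then obtain ts ta t es st where
      c: "c = ((ts, TEdge ta t # es), st)"
      and d: "d = ((t, es), (\<Union>\<alpha> \<in> {\<alpha>. hA \<alpha> = ta}. Theta tau \<alpha> st) \<inter> h -` {t})"
      by (cases rule: tstep.cases) auto
    from s' d obtain \<alpha> s where "s \<in> st" "hA \<alpha> = ta" "tau \<alpha> s = Some s'" "h s' = t"
      by (auto simp: Theta_def)
    with path c d show ?thesis
      by (intro bexI[of _ s] exI[of _ "s' # ss"]) auto
  next
    case 2
    then obtain ts a t es st where
      c: "c = ((ts, EEdge a t # es), st)"
      and d: "d = ((t, es), {s \<in> eset h hA tau S0 W t. l a s \<in> l a ` st})"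
      by (cases rule: estep.cases) auto
    from s' d obtain s where "s \<in> st" "l a s = l a s'" "h s' = t" "reachable S0 tau s'"
      using eset_reachable by force
    with path c d show ?thesis
      by (intro bexI[of _ s] exI[of _ "s' # ss"]) auto
  qed
qed

lemma concrete_path_nth:
  assumes "concrete_path h hA tau S0 l s es ss"
  shows "length ss = length es"
    and "\<And>k. k < length es \<Longrightarrow> h (ss ! k) = edge_target (es ! k)"
    and "\<And>k. k < length es \<Longrightarrow> concrete_edge hA tau S0 l (es ! k) ((s # ss) ! k) (ss ! k)"
  using assms
  by (induction es arbitrary: s ss)
     (auto simp: nth_Cons split: list.splits nat.splits)

theorem proposition4:
  fixes S0 :: "'s set" and tau :: "'act \<Rightarrow> 's \<Rightarrow> 's option" and l :: "'ag \<Rightarrow> 's \<Rightarrow> 'l"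
    and tS0 :: "'as set" and ttau :: "'aact \<Rightarrow> 'as \<Rightarrow> 'as option" and tlo :: "'ag \<Rightarrow> 'as \<Rightarrow> 'al"
    and h :: "'s \<Rightarrow> 'as" and hA :: "'act \<Rightarrow> 'aact"
    and W :: "'as \<Rightarrow> ('as \<times> ('ag, 'aact, 'as) edge list) set"
    and ts1 tsn :: 'as and es :: "('ag, 'aact, 'as) edge list"
    and st1 stn :: "'s set"
  assumes W_paths: "\<And>ts' p. p \<in> W ts' \<Longrightarrow> witness_path tS0 ttau tlo p ts'"
    and path: "valid_edges ttau tlo ts1 es"
    and st1: "st1 \<subseteq> h -` {ts1}"
    and run: "(cstep h hA tau S0 l W)\<^sup>*\<^sup>* ((ts1, es), st1) ((tsn, []), stn)"
    and nonempty: "stn \<noteq> {}"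
  shows "\<exists>ss :: 's list.
           length ss = length es + 1 \<and> hd ss \<in> st1 \<and> last ss \<in> stn \<and>
           (\<forall>k < length ss. h (ss ! k) = path_states (ts1, es) ! k) \<and>
           (\<forall>k < length es.
              (\<forall>ta t. es ! k = TEdge ta t \<longrightarrow>
                 (\<exists>\<alpha>. hA \<alpha> = ta \<and> tau \<alpha> (ss ! k) = Some (ss ! Suc k))) \<and>
              (\<forall>a t. es ! k = EEdge a t \<longrightarrow>
                 l a (ss ! k) = l a (ss ! Suc k) \<and> reachable S0 tau (ss ! Suc k)))"
proof -
  from nonempty obtain sn where "sn \<in> stn" by blast
  then obtain s ss where "s \<in> st1" and "last (s # ss) = sn"
    and cpath: "concrete_path h hA tau S0 l s es ss"
    using run_traces_back[OF run] by fastforce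
  note length = concrete_path_nth(1)[OF cpath]
    and over = concrete_path_nth(2)[OF cpath]
    and realised = concrete_path_nth(3)[OF cpath]
  have "h s = ts1" using \<open>s \<in> st1\<close> st1 by blast
  with over length have "\<forall>k < length (s # ss). h ((s # ss) ! k) = path_states (ts1, es) ! k"
    by (auto simp: path_states_def nth_Cons split: nat.split)
  moreover have "\<forall>k < length es.
      (\<forall>ta t. es ! k = TEdge ta t \<longrightarrow>
         (\<exists>\<alpha>. hA \<alpha> = ta \<and> tau \<alpha> ((s # ss) ! k) = Some ((s # ss) ! Suc k))) \<and>
      (\<forall>a t. es ! k = EEdge a t \<longrightarrow>
         l a ((s # ss) ! k) = l a ((s # ss) ! Suc k) \<and> reachable S0 tau ((s # ss) ! Suc k))"
    using realised by fastforce
  ultimately show ?thesis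
    using length \<open>s \<in> st1\<close> \<open>last (s # ss) = sn\<close> \<open>sn \<in> stn\<close>
    by (intro exI[of _ "s # ss"]) simp
qed

end
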